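(* Let $d=3$ and let $V_n$, $n\in\mathbb{N}$, be defined as follows: writing $z=(z_1,\mathbf z_2)\in\mathbb{R}\times\mathbb{R}^2$, $C_{k,r}=[k,k+\tfrac14]\times D_r$ with $D_r\subset\mathbb{R}^2$ the disc of radius $r$ centred at $0$, $f(r)=\frac{1}{r|\ln r|\ln|\ln r|}$ for $r\in(0,e^{-1})$, and $V_n(z)=f\big(\tfrac{z_1}{25n}\big)\sum_{k=1}^n\mathbf 1_{C_{k,\sqrt{k/(25n)}}}(z)$. Then there exist $n_i\in\mathbb{N}$, $i\in\mathbb{N}$, such that $\|K(V_{n_i},1)\|_\infty\ge4^i$ for every $i\in\mathbb{N}$.
   Context: For $d=3$, $t>0$, $x,y\in\mathbb{R}^3$: $K(t,x,y)=e^{-\frac{|x||y|-\langle x,y\rangle}{2}}|x|^{-1}\mathbf 1_{|x|\le t|y|}$, and $\|K(V,t)\|_\infty=\sup_{x,y\in\mathbb{R}^3}\int_{\mathbb{R}^3}K(t,z-x,y)|V(z)|\,dz$. *)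

theory Defs
  imports "HOL-Analysis.Analysis"
begin

definition kernK :: "real \<Rightarrow> real^3 \<Rightarrow> real^3 \<Rightarrow> real" where
  "kernK t x y = exp (- (norm x * norm y - inner x y) / 2) * inverse (norm x)
      * (if norm x \<le> t * norm y then 1 else 0)"

definition Knorm :: "(real^3 \<Rightarrow> real) \<Rightarrow> real \<Rightarrow> ennreal" where
  "Knorm V t = (SUP xy \<in> (UNIV :: ((real^3) \<times> (real^3)) set).
      nn_integral lborel (\<lambda>z::real^3. ennreal (kernK t (z - fst xy) (snd xy) * \<bar>V z\<bar>)))"

definition disc :: "real \<Rightarrow> (real \<times> real) set" where
  "disc r = {p. (fst p)\<^sup>2 + (snd p)\<^sup>2 \<le> r\<^sup>2}"

definition cyl :: "nat \<Rightarrow> real \<Rightarrow> (real^3) set" where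
  "cyl k r = {z. real k \<le> z$1 \<and> z$1 \<le> real k + 1/4 \<and> (z$2, z$3) \<in> disc r}"

definition fr :: "real \<Rightarrow> real" where
  "fr r = 1 / (r * \<bar>ln r\<bar> * ln \<bar>ln r\<bar>)"

definition Vn :: "nat \<Rightarrow> real^3 \<Rightarrow> real" where
  "Vn n z = fr (z$1 / (25 * real n)) *
      (\<Sum>k = 1..n. indicator (cyl k (sqrt (real k / (25 * real n)))) z)"

end

theory Submission imports Defs begin

text \<open>Take \<open>x = 0\<close> and \<open>y = (25n, 0, 0)\<close>. On the box \<open>[k, k + 1/4] \<times> [-\<rho>, \<rho>]\<^sup>2\<close>, \<open>\<rho>\<^sup>2 = k/(50n)\<close>,
  inside \<open>C\<^sub>k\<close>, points satisfy \<open>|z| - z\<^sub>1 \<le> 1/(50n)\<close>, so the exponential factor of \<open>K\<close> is at least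
  \<open>exp (-1/4) \<ge> 3/4\<close>, and \<open>V\<^sub>n \<ge> 25n/((k+1) L ln L)\<close> with \<open>L = ln (25n/k)\<close>. The contribution of the
  \<open>k\<close>-th box thus dominates \<open>3/128 (H k - H (k+1))\<close>, \<open>H k = ln ln ln (25n/k)\<close>, and the sum
  telescopes to \<open>3/128 (ln ln ln (25n) - O(1))\<close>, which is unbounded in \<open>n\<close>.\<close>

lemma ln_ln_diff_le:
  fixes a b :: real
  assumes "2 \<le> b" "b \<le> a" "a \<le> 2 * b"
  shows "ln (ln a) - ln (ln b) \<le> 4 * (a - b) / (a * ln a)"
proof -
  have lnb: "0 < ln b" and lna: "0 < ln a" using assms by auto
  have "ln a - ln b = ln (a / b)" using assms by (simp add: ln_div)
  also have "\<dots> \<le> a / b - 1" using assms by (intro ln_le_minus_one) simp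
  also have "\<dots> = (a - b) / b" using assms by (simp add: field_simps)
  finally have diff_ln: "ln a - ln b \<le> (a - b) / b" .
  have "ln (ln a) - ln (ln b) = ln (ln a / ln b)" using lna lnb by (simp add: ln_div)
  also have "\<dots> \<le> ln a / ln b - 1" using lna lnb by (intro ln_le_minus_one) simp
  also have "\<dots> = (ln a - ln b) / ln b" using lnb by (simp add: field_simps)
  also have "\<dots> \<le> (a - b) / (b * ln b)"
    using divide_right_mono[OF diff_ln, of "ln b"] lnb by simp
  finally have diff_lnln: "ln (ln a) - ln (ln b) \<le> (a - b) / (b * ln b)" .
  have "ln a \<le> ln (2 * b)" using assms by simp
  also have "\<dots> \<le> 2 * ln b" using assms ln_le_cancel_iff[of 2 b] by (simp add: ln_mult)
  finally have "a * ln a \<le> (2 * b) * (2 * ln b)" using assms lna by (intro mult_mono) auto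
  hence "4 * (a - b) / (4 * (b * ln b)) \<le> 4 * (a - b) / (a * ln a)"
    using assms lna lnb by (intro divide_left_mono mult_pos_pos) auto
  moreover have "4 * (a - b) / (4 * (b * ln b)) = (a - b) / (b * ln b)"
    by (rule mult_divide_mult_cancel_left) simp
  ultimately show ?thesis using diff_lnln by linarith
qed

lemma le_ln_ln_ln:
  fixes x M :: real
  assumes "exp (exp (exp M)) \<le> x"
  shows "M \<le> ln (ln (ln x))"
proof -
  have "exp (exp M) \<le> ln x"
    using assms ln_ge_iff[of x] exp_gt_zero[of "exp (exp M)"] by simp
  hence "exp M \<le> ln (ln x)"
    using ln_ge_iff[of "ln x"] exp_gt_zero[of "exp M"] by simp
  thus ?thesis using ln_ge_iff[of "ln (ln x)"] exp_gt_zero[of M] by simp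
qed

lemma fr_ge:
  assumes "0 < r" "r \<le> s" "1 < \<bar>ln r\<bar>" "\<bar>ln r\<bar> \<le> A"
  shows "1 / (s * A * ln A) \<le> fr r"
proof -
  have "0 < ln \<bar>ln r\<bar>" using assms ln_gt_zero by blast
  moreover have "ln \<bar>ln r\<bar> \<le> ln A" using assms by (subst ln_le_cancel_iff) auto
  ultimately have le: "r * \<bar>ln r\<bar> * ln \<bar>ln r\<bar> \<le> s * A * ln A"
    using assms by (intro mult_mono) auto
  have pos: "0 < r * \<bar>ln r\<bar> * ln \<bar>ln r\<bar>"
    using assms \<open>0 < ln \<bar>ln r\<bar>\<close> by (intro mult_pos_pos) auto
  show ?thesis unfolding fr_def by (rule frac_le[OF zero_le_one order_refl pos le])
qed

lemma inner_real3: "inner (x::real^3) y = x$1 * y$1 + x$2 * y$2 + x$3 * y$3"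
  by (simp add: inner_vec_def sum_3)

lemma norm_real3: "norm (x::real^3) = sqrt ((x$1)\<^sup>2 + (x$2)\<^sup>2 + (x$3)\<^sup>2)"
  by (simp add: norm_eq_sqrt_inner inner_real3 power2_eq_square)

lemma norm_sub_first_coord_le:
  fixes z :: "real^3"
  assumes "0 < z$1"
  shows "norm z - z$1 \<le> ((z$2)\<^sup>2 + (z$3)\<^sup>2) / (2 * z$1)"
proof -
  define s where "s = (z$2)\<^sup>2 + (z$3)\<^sup>2"
  have norm_z: "norm z = sqrt ((z$1)\<^sup>2 + s)" unfolding norm_real3 s_def by (simp add: add.assoc)
  have "0 \<le> s" unfolding s_def by simp
  hence ge: "z$1 \<le> norm z" unfolding norm_z using assms by (simp add: real_le_rsqrt)
  have "(norm z - z$1) * (norm z + z$1) = s"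
    unfolding norm_z using \<open>0 \<le> s\<close> by (simp add: algebra_simps power2_eq_square[symmetric])
  hence "norm z - z$1 = s / (norm z + z$1)" using ge assms by (simp add: field_simps)
  also have "\<dots> \<le> s / (2 * z$1)" using ge assms \<open>0 \<le> s\<close> by (intro divide_left_mono) auto
  finally show ?thesis unfolding s_def .
qed

lemma kernK_on_axis:
  fixes z :: "real^3"
  assumes "0 \<le> R" "norm z \<le> R"
  shows "kernK 1 z (vector [R, 0, 0]) = exp (- (R * (norm z - z$1)) / 2) / norm z"
proof -
  have "norm (vector [R, 0, 0] :: real^3) = R" unfolding norm_real3 using assms by simp
  moreover have "inner z (vector [R, 0, 0]) = R * z$1" unfolding inner_real3 by simp
  moreover have "norm z * R - R * z$1 = R * (norm z - z$1)" by (simp add: right_diff_distrib)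
  ultimately show ?thesis unfolding kernK_def using assms(2)
    by (simp only: if_True mult_1 mult_1_right divide_inverse)
qed

lemma nn_integral_ge_sum_disjoint:
  fixes f :: "'a \<Rightarrow> ennreal"
  assumes "finite I" "disjoint_family_on B I" "\<And>k. k \<in> I \<Longrightarrow> B k \<in> sets M"
    and "\<And>k z. k \<in> I \<Longrightarrow> z \<in> B k \<Longrightarrow> c k \<le> f z"
  shows "(\<Sum>k\<in>I. c k * emeasure M (B k)) \<le> (\<integral>\<^sup>+ z. f z \<partial>M)"
proof -
  have pointwise: "(\<Sum>k\<in>I. c k * indicator (B k) z) \<le> f z" for z
  proof (cases "\<exists>j\<in>I. z \<in> B j")
    case True
    then obtain j where j: "j \<in> I" "z \<in> B j" by blast
    have "(\<Sum>k\<in>I. c k * indicator (B k) z) = (\<Sum>k\<in>I. if k = j then c j else 0)"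
      using j assms(2) by (intro sum.cong) (auto simp: disjoint_family_on_def indicator_def)
    also have "\<dots> = c j" using j assms(1) by simp
    finally show ?thesis using assms(4) j by simp
  next
    case False
    thus ?thesis by (simp add: indicator_def)
  qed
  have "(\<Sum>k\<in>I. c k * emeasure M (B k)) = (\<integral>\<^sup>+ z. (\<Sum>k\<in>I. c k * indicator (B k) z) \<partial>M)"
    using assms(3) by (simp add: nn_integral_sum nn_integral_cmult_indicator)
  also have "\<dots> \<le> (\<integral>\<^sup>+ z. f z \<partial>M)" by (intro nn_integral_mono pointwise)
  finally show ?thesis .
qed

lemma nn_integral_kernK_le_Knorm:
  "(\<integral>\<^sup>+ z. ennreal (kernK t z y * \<bar>V z\<bar>) \<partial>lborel) \<le> Knorm V t"
  unfolding Knorm_def by (rule SUP_upper2[where i = "(0, y)"]) simp_all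

definition log_ratio :: "nat \<Rightarrow> nat \<Rightarrow> real" where
  "log_ratio n k = ln (25 * real n / real k)"

text \<open>A box inside the cylinder \<open>C\<^sub>k\<close> of \<open>V\<^sub>n\<close>: its cross-section \<open>[-\<rho>,\<rho>]\<^sup>2\<close> is the square
  inscribed in the disc of radius \<open>\<surd>2 \<rho>\<close>.\<close>

definition core_box :: "nat \<Rightarrow> nat \<Rightarrow> (real^3) set" where
  "core_box n k = (let \<rho> = sqrt (real k / (50 * real n))
     in cbox (vector [real k, - \<rho>, - \<rho>]) (vector [real k + 1/4, \<rho>, \<rho>]))"

definition core_bound :: "nat \<Rightarrow> nat \<Rightarrow> real" where
  "core_bound n k = 3 / (4 * (real k + 1))
     * (25 * real n / ((real k + 1) * log_ratio n k * ln (log_ratio n k)))"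

lemma log_ratio_ge_2:
  assumes "1 \<le> k" "k \<le> Suc n" "1 \<le> n"
  shows "2 \<le> log_ratio n k"
proof -
  have "exp (2::real) = exp 1 * exp 1" by (simp add: exp_add[symmetric])
  also have "\<dots> \<le> 3 * 3" by (rule mult_mono) (use exp_le in auto)
  also have "\<dots> \<le> 25 * real n / real k" using assms by (simp add: field_simps)
  finally show ?thesis unfolding log_ratio_def using assms by (subst ln_ge_iff) auto
qed

lemma core_box_coords:
  assumes "z \<in> core_box n k"
  shows "real k \<le> z$1" "z$1 \<le> real k + 1/4" "(z$2)\<^sup>2 + (z$3)\<^sup>2 \<le> real k / (25 * real n)"
proof -
  define \<rho> where "\<rho> = sqrt (real k / (50 * real n))"
  have z: "real k \<le> z$1" "z$1 \<le> real k + 1/4" "\<bar>z$2\<bar> \<le> \<rho>" "\<bar>z$3\<bar> \<le> \<rho>"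
    using assms unfolding core_box_def Let_def \<rho>_def[symmetric] mem_box_cart(2) forall_3 by auto
  show "real k \<le> z$1" "z$1 \<le> real k + 1/4" using z by auto
  have "0 \<le> \<rho>" unfolding \<rho>_def by simp
  hence "(z$2)\<^sup>2 \<le> \<rho>\<^sup>2" "(z$3)\<^sup>2 \<le> \<rho>\<^sup>2" using z(3,4) by (metis abs_le_square_iff abs_of_nonneg)+
  moreover have "\<rho>\<^sup>2 = real k / (50 * real n)" unfolding \<rho>_def by simp
  ultimately show "(z$2)\<^sup>2 + (z$3)\<^sup>2 \<le> real k / (25 * real n)" by simp
qed

lemma disjoint_family_core_box: "disjoint_family (core_box n)"
  unfolding disjoint_family_on_def
proof (intro ballI impI)
  fix j k :: nat assume "j \<noteq> k"
  show "core_box n j \<inter> core_box n k = {}"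
  proof (rule ccontr)
    assume "core_box n j \<inter> core_box n k \<noteq> {}"
    then obtain z where "z \<in> core_box n j" "z \<in> core_box n k" by blast
    hence "real j < real k + 1" "real k < real j + 1" using core_box_coords[of z n] by fastforce+
    with \<open>j \<noteq> k\<close> show False by linarith
  qed
qed

lemma emeasure_core_box: "emeasure lborel (core_box n k) = ennreal (real k / (50 * real n))"
proof -
  define \<rho> where "\<rho> = sqrt (real k / (50 * real n))"
  have box: "core_box n k = cbox (vector [real k, - \<rho>, - \<rho>]) (vector [real k + 1/4, \<rho>, \<rho>])"
    unfolding core_box_def Let_def \<rho>_def ..
  have "0 \<le> \<rho>" unfolding \<rho>_def by simp
  hence nonempty: "core_box n k \<noteq> {}" unfolding box interval_eq_empty_cart(2) by (auto simp: forall_3)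
  have "emeasure lborel (core_box n k) = ennreal (measure lborel (core_box n k))"
    unfolding box using emeasure_lborel_cbox_finite by (intro emeasure_eq_ennreal_measure) (simp add: less_top)
  also have "measure lborel (core_box n k) = \<rho> * \<rho>"
    using content_cbox_cart[OF nonempty[unfolded box]] unfolding box UNIV_3 by simp
  also have "\<rho> * \<rho> = real k / (50 * real n)" unfolding \<rho>_def by simp
  finally show ?thesis .
qed

lemma Vn_ge_fr:
  assumes "1 \<le> k" "k \<le> n" "z \<in> cyl k (sqrt (real k / (25 * real n)))"
    and "0 \<le> fr (z$1 / (25 * real n))"
  shows "fr (z$1 / (25 * real n)) \<le> Vn n z"
proof -
  have "(1::real) \<le> (\<Sum>j = 1..n. indicator (cyl j (sqrt (real j / (25 * real n)))) z)"
    using member_le_sum[of k "{1..n}" "\<lambda>j. indicator (cyl j (sqrt (real j / (25 * real n)))) z :: real"]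
      assms by simp
  from mult_left_mono[OF this assms(4)] show ?thesis unfolding Vn_def by simp
qed

lemma kernK_ge_on_core_box:
  assumes k: "1 \<le> k" "k \<le> n" and z: "z \<in> core_box n k"
  shows "3 / (4 * (real k + 1)) \<le> kernK 1 z (vector [25 * real n, 0, 0])"
proof -
  define t where "t = z$1"
  have t: "real k \<le> t" "t \<le> real k + 1/4" and s: "(z$2)\<^sup>2 + (z$3)\<^sup>2 \<le> real k / (25 * real n)"
    using core_box_coords[OF z] unfolding t_def by auto
  have "0 < t" using t k by linarith
  have "t \<le> norm z" unfolding t_def using component_le_norm_cart[of z 1] by simp
  have "norm z - t \<le> (real k / (25 * real n)) / (2 * t)"
    unfolding t_def using norm_sub_first_coord_le[of z] s \<open>0 < t\<close> t_def
    by (smt (verit) divide_right_mono zero_le_mult_iff)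
  also have "\<dots> \<le> (real k / (25 * real n)) / (2 * real k)" using t k by (intro divide_left_mono) auto
  also have "\<dots> = 1 / (50 * real n)" using k by (simp add: field_simps)
  finally have near_axis: "norm z - t \<le> 1 / (50 * real n)" .
  moreover have "1 / (50 * real n) \<le> 1/2" using k by simp
  ultimately have "norm z \<le> real k + 1" using t by linarith
  define E where "E = exp (- (25 * real n * (norm z - t)) / 2)"
  have "exp (- 1/4) \<le> E" unfolding E_def using near_axis k by (simp add: field_simps)
  hence "3/4 \<le> E" using exp_ge_add_one_self[of "- 1/4 :: real"] by linarith
  have "3 / (4 * (real k + 1)) = (3/4) / (real k + 1)" by simp
  also have "\<dots> \<le> E / norm z"
    using \<open>3/4 \<le> E\<close> \<open>norm z \<le> real k + 1\<close> \<open>t \<le> norm z\<close> \<open>0 < t\<close> by (intro frac_le) auto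
  also have "\<dots> = kernK 1 z (vector [25 * real n, 0, 0])"
    using kernK_on_axis[of "25 * real n" z] \<open>norm z \<le> real k + 1\<close> k unfolding E_def t_def by simp
  finally show ?thesis .
qed

lemma Vn_ge_on_core_box:
  assumes k: "1 \<le> k" "k \<le> n" and z: "z \<in> core_box n k"
  shows "25 * real n / ((real k + 1) * log_ratio n k * ln (log_ratio n k)) \<le> Vn n z"
proof -
  define t where "t = z$1"
  have t: "real k \<le> t" "t \<le> real k + 1/4" and s: "(z$2)\<^sup>2 + (z$3)\<^sup>2 \<le> real k / (25 * real n)"
    using core_box_coords[OF z] unfolding t_def by auto
  have "0 < t" using t k by linarith
  have "log_ratio n (Suc k) \<le> \<bar>ln (t / (25 * real n))\<bar>" "\<bar>ln (t / (25 * real n))\<bar> \<le> log_ratio n k"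
    using t k \<open>0 < t\<close> unfolding log_ratio_def
    by (simp_all add: ln_div abs_if divide_left_mono ln_le_cancel_iff)
  moreover have "2 \<le> log_ratio n (Suc k)" using k by (intro log_ratio_ge_2) auto
  ultimately have "1 / ((real k + 1) / (25 * real n) * log_ratio n k * ln (log_ratio n k))
      \<le> fr (t / (25 * real n))"
    using t k \<open>0 < t\<close> by (intro fr_ge) (auto simp: divide_right_mono)
  hence fr_lower: "25 * real n / ((real k + 1) * log_ratio n k * ln (log_ratio n k)) \<le> fr (t / (25 * real n))"
    by simp
  moreover have "0 \<le> 25 * real n / ((real k + 1) * log_ratio n k * ln (log_ratio n k))"
    using log_ratio_ge_2[of k n] k by simp
  moreover have "z \<in> cyl k (sqrt (real k / (25 * real n)))"
    unfolding cyl_def disc_def using t s t_def by simp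
  ultimately have "fr (t / (25 * real n)) \<le> Vn n z"
    unfolding t_def using k by (intro Vn_ge_fr) auto
  with fr_lower show ?thesis by linarith
qed

lemma integrand_ge_core_bound:
  assumes "1 \<le> k" "k \<le> n" "z \<in> core_box n k"
  shows "core_bound n k \<le> kernK 1 z (vector [25 * real n, 0, 0]) * \<bar>Vn n z\<bar>"
proof -
  note kernel = kernK_ge_on_core_box[OF assms]
  have "0 \<le> kernK 1 z (vector [25 * real n, 0, 0])" by (rule order_trans[OF _ kernel]) simp
  moreover have "0 \<le> 25 * real n / ((real k + 1) * log_ratio n k * ln (log_ratio n k))"
    using log_ratio_ge_2[of k n] assms by simp
  ultimately show ?thesis unfolding core_bound_def
    using kernel Vn_ge_on_core_box[OF assms] by (intro mult_mono) auto
qed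

lemma core_box_mass_ge:
  assumes "1 \<le> k" "k \<le> n"
  shows "3/128 * (ln (ln (log_ratio n k)) - ln (ln (log_ratio n (Suc k))))
    \<le> core_bound n k * (real k / (50 * real n))"
proof -
  define a where "a = log_ratio n k"
  define b where "b = log_ratio n (Suc k)"
  have "2 \<le> a" "2 \<le> b" unfolding a_def b_def using assms by (auto intro: log_ratio_ge_2)
  have k: "1 \<le> real k" using assms by simp
  have "a - b = ln ((real k + 1) / real k)"
    unfolding a_def b_def log_ratio_def using assms by (simp add: ln_div)
  moreover have "ln ((real k + 1) / real k) \<le> 1 / real k"
    using ln_le_minus_one[of "(real k + 1) / real k"] k by (simp add: field_simps)
  moreover have "0 \<le> ln ((real k + 1) / real k)" using k by simp
  ultimately have "0 \<le> a - b" "a - b \<le> 1 / real k" by auto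
  moreover have "1 / real k \<le> 1" using k by simp
  ultimately have "ln (ln a) - ln (ln b) \<le> 4 * (1 / real k) / (a * ln a)"
    using ln_ln_diff_le[of b a] \<open>2 \<le> a\<close> \<open>2 \<le> b\<close>
    by (smt (verit) divide_right_mono mult_nonneg_nonneg ln_ge_zero)
  hence "3/128 * (ln (ln a) - ln (ln b)) \<le> 3/128 * (4 * (1 / real k) / (a * ln a))"
    by (rule mult_left_mono) simp
  also have "\<dots> = (3/32) / (real k * (a * ln a))" by simp
  also have "\<dots> = (3/8) * real k / ((4 * real k * real k) * (a * ln a))" using k by simp
  also have "\<dots> \<le> (3/8) * real k / ((real k + 1)\<^sup>2 * (a * ln a))"
  proof -
    have "(real k + 1)\<^sup>2 \<le> (2 * real k)\<^sup>2" using k by (intro power_mono) auto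
    hence "(real k + 1)\<^sup>2 \<le> 4 * real k * real k" by (simp add: power2_eq_square)
    thus ?thesis using k \<open>2 \<le> a\<close> by (intro divide_left_mono mult_right_mono mult_pos_pos) auto
  qed
  also have "\<dots> = core_bound n k * (real k / (50 * real n))"
    unfolding core_bound_def a_def using assms by (simp add: field_simps power2_eq_square)
  finally show ?thesis unfolding a_def b_def .
qed

lemma ln_ln_log_ratio_last_le:
  assumes "1 \<le> n"
  shows "ln (ln (log_ratio n (Suc n))) \<le> 25"
proof -
  define b where "b = log_ratio n (Suc n)"
  have "2 \<le> b" unfolding b_def using assms by (intro log_ratio_ge_2) auto
  hence "0 < b" "0 < ln b" by auto
  have "ln (ln b) \<le> ln b" using ln_le_minus_one[OF \<open>0 < ln b\<close>] by linarith
  also have "\<dots> \<le> b" using ln_le_minus_one[OF \<open>0 < b\<close>] by linarith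
  also have "\<dots> \<le> 25 * real n / real (Suc n)"
    unfolding b_def log_ratio_def using ln_le_minus_one[of "25 * real n / real (Suc n)"] assms by simp
  also have "\<dots> \<le> 25" by (simp add: field_simps)
  finally show ?thesis unfolding b_def .
qed

lemma core_bound_nonneg: "1 \<le> k \<Longrightarrow> k \<le> n \<Longrightarrow> 0 \<le> core_bound n k"
  using log_ratio_ge_2[of k n] unfolding core_bound_def by simp

lemma sum_core_box_mass_le_Knorm:
  "(\<Sum>k = 1..n. ennreal (core_bound n k * (real k / (50 * real n)))) \<le> Knorm (Vn n) 1"
proof -
  have "(\<Sum>k = 1..n. ennreal (core_bound n k * (real k / (50 * real n))))
      = (\<Sum>k = 1..n. ennreal (core_bound n k) * emeasure lborel (core_box n k))"
    by (intro sum.cong refl) (simp add: emeasure_core_box ennreal_mult[symmetric] core_bound_nonneg)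
  also have "\<dots> \<le> (\<integral>\<^sup>+ z. ennreal (kernK 1 z (vector [25 * real n, 0, 0]) * \<bar>Vn n z\<bar>) \<partial>lborel)"
    using disjoint_family_core_box
    by (intro nn_integral_ge_sum_disjoint ennreal_leI integrand_ge_core_bound)
      (auto simp: core_box_def Let_def disjoint_family_on_def)
  also have "\<dots> \<le> Knorm (Vn n) 1" by (rule nn_integral_kernK_le_Knorm)
  finally show ?thesis .
qed

lemma Knorm_Vn_ge:
  "ennreal (3/128 * (ln (ln (log_ratio n 1)) - ln (ln (log_ratio n (Suc n))))) \<le> Knorm (Vn n) 1"
proof -
  let ?H = "\<lambda>k. ln (ln (log_ratio n k))"
  have "(\<Sum>k = 1..n. ?H k - ?H (Suc k)) = ?H 1 - ?H (Suc n)"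
    using sum_Suc_diff[of 1 n "\<lambda>k. - ?H k"] by simp
  hence "3/128 * (?H 1 - ?H (Suc n)) = (\<Sum>k = 1..n. 3/128 * (?H k - ?H (Suc k)))"
    by (simp only: sum_distrib_left[symmetric])
  also have "\<dots> \<le> (\<Sum>k = 1..n. core_bound n k * (real k / (50 * real n)))"
    by (intro sum_mono core_box_mass_ge) auto
  finally have "ennreal (3/128 * (?H 1 - ?H (Suc n)))
      \<le> ennreal (\<Sum>k = 1..n. core_bound n k * (real k / (50 * real n)))" by (rule ennreal_leI)
  also have "\<dots> = (\<Sum>k = 1..n. ennreal (core_bound n k * (real k / (50 * real n))))"
    by (intro sum_ennreal[symmetric]) (simp add: core_bound_nonneg)
  also have "\<dots> \<le> Knorm (Vn n) 1" by (rule sum_core_box_mass_le_Knorm)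
  finally show ?thesis .
qed

theorem lemma4p3:
  shows "\<exists>ni :: nat \<Rightarrow> nat. \<forall>i. 1 \<le> ni i \<and> Knorm (Vn (ni i)) 1 \<ge> 4 ^ i"
proof (intro exI allI conjI)
  fix i :: nat
  define M :: real where "M = 25 + 43 * 4 ^ i"
  define n where "n = nat \<lceil>exp (exp (exp M))\<rceil>"
  have "exp (exp (exp M)) \<le> real n" unfolding n_def by linarith
  moreover have "0 < exp (exp (exp M))" by simp
  ultimately show n: "1 \<le> n" by linarith
  have "M \<le> ln (ln (log_ratio n 1))"
    unfolding log_ratio_def using \<open>exp (exp (exp M)) \<le> real n\<close> by (intro le_ln_ln_ln) simp
  hence "43 * 4 ^ i \<le> ln (ln (log_ratio n 1)) - ln (ln (log_ratio n (Suc n)))"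
    using ln_ln_log_ratio_last_le[OF n] unfolding M_def by linarith
  hence "3/128 * (43 * 4 ^ i) \<le> 3/128 * (ln (ln (log_ratio n 1)) - ln (ln (log_ratio n (Suc n))))"
    by (rule mult_left_mono) simp
  moreover have "(4::real) ^ i \<le> 3/128 * (43 * 4 ^ i)" by simp
  ultimately have "(4::real) ^ i \<le> 3/128 * (ln (ln (log_ratio n 1)) - ln (ln (log_ratio n (Suc n))))"
    by linarith
  hence "ennreal (4 ^ i) \<le> Knorm (Vn n) 1"
    using Knorm_Vn_ge ennreal_leI order_trans by blast
  moreover have "ennreal ((4::real) ^ i) = 4 ^ i"
    by (metis ennreal_power ennreal_numeral zero_le_numeral)
  ultimately show "4 ^ i \<le> Knorm (Vn n) 1" by simp
qed

end
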